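(* Let $a,b\in[0,1]$ with $a+b>1$, $\bar a=1-a$, $\bar b=1-b$, and $\gamma=2^{\frac{H(b)-H(a)}{a+b-1}}$. Define the following sets of real numbers $\beta$: $\mathcal L_1=\{\max(\frac{\bar a}{\bar b}\gamma,\frac{\gamma(\bar a+b)-\sqrt{\gamma^2(\bar a+b)^2-4a\bar b}}{2\bar b})\le\beta\le\frac{\gamma(\bar a+b)+\sqrt{\gamma^2(\bar a+b)^2-4a\bar b}}{2\bar b}\}$, $\mathcal L_2=\{\frac{(a+\bar b)+\sqrt{(a+\bar b)^2-4\bar ab\gamma^2}}{2b\gamma}\le\beta\le\frac{\bar a}{\bar b}\gamma\}$, $\mathcal L_3=\{\beta\le\min(\frac{\bar a}{\bar b}\gamma,\frac{(a+\bar b)-\sqrt{(a+\bar b)^2-4\bar ab\gamma^2}}{2b\gamma})\}$, $\mathcal L_4=\{\beta\le\min(\frac{b\gamma}{a},\frac{\gamma(\bar a+b)-\sqrt{\gamma^2(\bar a+b)^2-4a\bar b}}{2a})\}$, $\mathcal L_5=\{\frac{\gamma(\bar a+b)+\sqrt{\gamma^2(\bar a+b)^2-4a\bar b}}{2a}\le\beta\le\frac{b\gamma}{a}\}$, $\mathcal L_6=\{\max(\frac{b\gamma}{a},\frac{(a+\bar b)-\sqrt{(a+\bar b)^2-4\bar ab\gamma^2}}{2\bar a\gamma})\le\beta\le\frac{(a+\bar b)+\sqrt{(a+\bar b)^2-4\bar ab\gamma^2}}{2\bar a\gamma}\}$, $\mathcal L_0=\{1\le\beta\le\min(\frac{a}{\bar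 a\gamma},\frac{b\gamma}{\bar b})\}$. If $(\mathcal L_1\cup\mathcal L_2\cup\mathcal L_3)\cap(\mathcal L_4\cup\mathcal L_5\cup\mathcal L_6)\cap\mathcal L_0\neq\emptyset$, then feedback does not increase the capacity of the POST$(a,b)$ channel, i.e. its capacity without feedback equals its feedback capacity.
   Context: $H(p)=-p\log_2p-(1-p)\log_2(1-p)$ is the binary entropy. The POST$(a,b)$ channel has binary inputs $X_i$ and outputs $Y_i$, with the previous output $Y_{i-1}$ as state. If $y_{i-1}=0$: $P(Y_i=0|X_i=0)=a$, $P(Y_i=0|X_i=1)=\bar b$; if $y_{i-1}=1$: $P(Y_i=0|X_i=0)=b$, $P(Y_i=0|X_i=1)=\bar a$. Feedback capacity: encoder observes all past outputs; capacity without feedback: encoder sees only the message. *)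

theory Defs
  imports Complex_Main
begin

definition bin_ent :: "real \<Rightarrow> real" where
  "bin_ent p = (if p = 0 \<or> p = 1 then 0 else - p * log 2 p - (1 - p) * log 2 (1 - p))"

text \<open>Bits are booleans, False = 0, True = 1. The state is the previous output;
  the initial state is y_0 = 0 (False).\<close>

definition post_W :: "real \<Rightarrow> real \<Rightarrow> bool \<Rightarrow> bool \<Rightarrow> bool \<Rightarrow> real" where
  "post_W a b s x y =
     (let p0 = (if \<not> s then (if \<not> x then a else 1 - b) else (if \<not> x then b else 1 - a))
      in if y then 1 - p0 else p0)"
  \<comment> \<open>P(Y_i = y | X_i = x, Y_{i-1} = s)\<close>

definition prev_out :: "bool list \<Rightarrow> nat \<Rightarrow> bool" where
  "prev_out ys i = (if i = 0 then False else ys ! (i - 1))"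

definition chan_prob :: "real \<Rightarrow> real \<Rightarrow> bool list \<Rightarrow> bool list \<Rightarrow> real" where
  "chan_prob a b xs ys = (\<Prod>i<length xs. post_W a b (prev_out ys i) (xs ! i) (ys ! i))"

definition blists :: "nat \<Rightarrow> bool list set" where
  "blists n = {xs. length xs = n}"

definition info_term :: "real \<Rightarrow> real \<Rightarrow> real" where
  "info_term p r = (if p = 0 then 0 else p * log 2 (p / r))"

definition input_dist :: "nat \<Rightarrow> (bool list \<Rightarrow> real) \<Rightarrow> bool" where
  "input_dist n p \<longleftrightarrow> (\<forall>xs\<in>blists n. 0 \<le> p xs) \<and> (\<Sum>xs\<in>blists n. p xs) = 1"

definition out_nf :: "real \<Rightarrow> real \<Rightarrow> nat \<Rightarrow> (bool list \<Rightarrow> real) \<Rightarrow> bool list \<Rightarrow> real" where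
  "out_nf a b n p ys = (\<Sum>xs\<in>blists n. p xs * chan_prob a b xs ys)"

definition mutual_info_nf :: "real \<Rightarrow> real \<Rightarrow> nat \<Rightarrow> (bool list \<Rightarrow> real) \<Rightarrow> real" where
  "mutual_info_nf a b n p =
     (\<Sum>xs\<in>blists n. \<Sum>ys\<in>blists n.
        info_term (p xs * chan_prob a b xs ys) (p xs * out_nf a b n p ys))"

definition post_Cnf_n :: "real \<Rightarrow> real \<Rightarrow> nat \<Rightarrow> real" where
  "post_Cnf_n a b n = Sup {mutual_info_nf a b n p / real n | p. input_dist n p}"

definition post_capacity_nf :: "real \<Rightarrow> real \<Rightarrow> real" where
  "post_capacity_nf a b = lim (post_Cnf_n a b)"

text \<open>A feedback encoder (causally conditioned input distribution p(x^n || y^{n-1}))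
  is given by q xs ys = P(X_i = 1 | x^{i-1} = xs, y^{i-1} = ys).\<close>

definition fb_policy :: "(bool list \<Rightarrow> bool list \<Rightarrow> real) \<Rightarrow> bool" where
  "fb_policy q \<longleftrightarrow> (\<forall>xs ys. 0 \<le> q xs ys \<and> q xs ys \<le> 1)"

definition enc_prob :: "(bool list \<Rightarrow> bool list \<Rightarrow> real) \<Rightarrow> bool list \<Rightarrow> bool list \<Rightarrow> real" where
  "enc_prob q xs ys = (\<Prod>i<length xs.
      if xs ! i then q (take i xs) (take i ys) else 1 - q (take i xs) (take i ys))"

definition out_fb :: "real \<Rightarrow> real \<Rightarrow> nat \<Rightarrow> (bool list \<Rightarrow> bool list \<Rightarrow> real) \<Rightarrow> bool list \<Rightarrow> real" where
  "out_fb a b n q ys = (\<Sum>xs\<in>blists n. enc_prob q xs ys * chan_prob a b xs ys)"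

definition directed_info_fb :: "real \<Rightarrow> real \<Rightarrow> nat \<Rightarrow> (bool list \<Rightarrow> bool list \<Rightarrow> real) \<Rightarrow> real" where
  "directed_info_fb a b n q =
     (\<Sum>xs\<in>blists n. \<Sum>ys\<in>blists n.
        info_term (enc_prob q xs ys * chan_prob a b xs ys) (enc_prob q xs ys * out_fb a b n q ys))"

definition post_Cfb_n :: "real \<Rightarrow> real \<Rightarrow> nat \<Rightarrow> real" where
  "post_Cfb_n a b n = Sup {directed_info_fb a b n q / real n | q. fb_policy q}"

definition post_capacity_fb :: "real \<Rightarrow> real \<Rightarrow> real" where
  "post_capacity_fb a b = lim (post_Cfb_n a b)"

definition post_gamma :: "real \<Rightarrow> real \<Rightarrow> real" where
  "post_gamma a b = 2 powr ((bin_ent b - bin_ent a) / (a + b - 1))"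

text \<open>Discriminants D1 = g^2 (abar+b)^2 - 4 a bbar, D2 = (a+bbar)^2 - 4 abar b g^2.
  A set whose defining expressions involve sqrt of a negative number or
  division by zero is read as imposing that these are well defined (real, finite).\<close>

definition D1 :: "real \<Rightarrow> real \<Rightarrow> real" where
  "D1 a b = (post_gamma a b)^2 * ((1 - a) + b)^2 - 4 * a * (1 - b)"

definition D2 :: "real \<Rightarrow> real \<Rightarrow> real" where
  "D2 a b = (a + (1 - b))^2 - 4 * (1 - a) * b * (post_gamma a b)^2"

definition L1 :: "real \<Rightarrow> real \<Rightarrow> real set" where
  "L1 a b = (let g = post_gamma a b; ab = 1 - a; bb = 1 - b in
     {\<beta>. D1 a b \<ge> 0 \<and> bb \<noteq> 0 \<and>
        max (ab / bb * g) ((g * (ab + b) - sqrt (D1 a b)) / (2 * bb)) \<le> \<beta> \<and>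
        \<beta> \<le> (g * (ab + b) + sqrt (D1 a b)) / (2 * bb)})"

definition L2 :: "real \<Rightarrow> real \<Rightarrow> real set" where
  "L2 a b = (let g = post_gamma a b; ab = 1 - a; bb = 1 - b in
     {\<beta>. D2 a b \<ge> 0 \<and> bb \<noteq> 0 \<and> b * g \<noteq> 0 \<and>
        ((a + bb) + sqrt (D2 a b)) / (2 * b * g) \<le> \<beta> \<and> \<beta> \<le> ab / bb * g})"

definition L3 :: "real \<Rightarrow> real \<Rightarrow> real set" where
  "L3 a b = (let g = post_gamma a b; ab = 1 - a; bb = 1 - b in
     {\<beta>. D2 a b \<ge> 0 \<and> bb \<noteq> 0 \<and> b * g \<noteq> 0 \<and>
        \<beta> \<le> min (ab / bb * g) (((a + bb) - sqrt (D2 a b)) / (2 * b * g))})"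

definition L4 :: "real \<Rightarrow> real \<Rightarrow> real set" where
  "L4 a b = (let g = post_gamma a b; ab = 1 - a; bb = 1 - b in
     {\<beta>. D1 a b \<ge> 0 \<and> a \<noteq> 0 \<and>
        \<beta> \<le> min (b * g / a) ((g * (ab + b) - sqrt (D1 a b)) / (2 * a))})"

definition L5 :: "real \<Rightarrow> real \<Rightarrow> real set" where
  "L5 a b = (let g = post_gamma a b; ab = 1 - a; bb = 1 - b in
     {\<beta>. D1 a b \<ge> 0 \<and> a \<noteq> 0 \<and>
        (g * (ab + b) + sqrt (D1 a b)) / (2 * a) \<le> \<beta> \<and> \<beta> \<le> b * g / a})"

definition L6 :: "real \<Rightarrow> real \<Rightarrow> real set" where
  "L6 a b = (let g = post_gamma a b; ab = 1 - a; bb = 1 - b in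
     {\<beta>. D2 a b \<ge> 0 \<and> a \<noteq> 0 \<and> ab * g \<noteq> 0 \<and>
        max (b * g / a) (((a + bb) - sqrt (D2 a b)) / (2 * ab * g)) \<le> \<beta> \<and>
        \<beta> \<le> ((a + bb) + sqrt (D2 a b)) / (2 * ab * g)})"

definition L0 :: "real \<Rightarrow> real \<Rightarrow> real set" where
  "L0 a b = (let g = post_gamma a b; ab = 1 - a; bb = 1 - b in
     {\<beta>. ab * g \<noteq> 0 \<and> bb \<noteq> 0 \<and> 1 \<le> \<beta> \<and> \<beta> \<le> min (a / (ab * g)) (b * g / bb)})"

end

theory Submission
  imports Defs
begin

text \<open>Let Q be the law of the binary Markov chain on outputs that repeats its previous value
  with probability \<gamma>/(1+\<gamma>), started from 0. The value of \<gamma> is chosen so that the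
  divergence D(W(\<cdot>|s,x) \<parallel> Q(\<cdot>|s)) is one constant C for all states s and inputs x. Hence for
  every input process, with or without feedback, I \<le> E log (P(y^n\<parallel>x^n) / Q(y^n)) = n C.
  With feedback, sending 1 with a bias depending only on the last output makes the output
  law exactly Q, so n C is attained. Without feedback, the same output law is produced by a
  hidden-Markov input with two hidden states whose conditional law given the last output s is
  proportional to (\<beta>, 1) (weight \<beta> on state s); its transition probabilities are nonnegative
  under the sign conditions on four quadratics in \<beta> that the regions L0, ..., L6
  encode. So both n-letter capacities equal C for every n \<ge> 1.\<close>

lemma finite_blists[simp]: "finite (blists n)"
proof -
  have "blists n = {xs. set xs \<subseteq> UNIV \<and> length xs = n}" unfolding blists_def by auto
  thus ?thesis using finite_lists_length_eq[of "UNIV::bool set" n] by simp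
qed

lemma blists_0[simp]: "blists 0 = {[]}" unfolding blists_def by auto

lemma blists_Suc: "blists (Suc n) = (\<lambda>zs. zs @ [False]) ` blists n \<union> (\<lambda>zs. zs @ [True]) ` blists n"
proof (rule set_eqI, rule iffI)
  fix zs assume "zs \<in> blists (Suc n)"
  hence l: "length zs = Suc n" unfolding blists_def by auto
  then obtain ys y where zs: "zs = ys @ [y]" by (metis length_Suc_conv_rev)
  with l have "ys \<in> blists n" unfolding blists_def by auto
  thus "zs \<in> (\<lambda>zs. zs @ [False]) ` blists n \<union> (\<lambda>zs. zs @ [True]) ` blists n"
    using zs by (cases y) auto
qed (auto simp: blists_def)

lemma sum_blists_Suc:
  "(\<Sum>zs\<in>blists (Suc n). f zs) = (\<Sum>zs\<in>blists n. f (zs @ [False]) + f (zs @ [True]))"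
proof -
  have d: "(\<lambda>zs. zs @ [False]) ` blists n \<inter> (\<lambda>zs. zs @ [True]) ` blists n = {}" by auto
  have i1: "inj_on (\<lambda>zs. zs @ [False]) (blists n)" by (auto simp: inj_on_def)
  have i2: "inj_on (\<lambda>zs. zs @ [True]) (blists n)" by (auto simp: inj_on_def)
  show ?thesis unfolding blists_Suc
    by (subst sum.union_disjoint) (use d i1 i2 in \<open>auto simp: sum.reindex sum.distrib\<close>)
qed

lemma length_blists: "zs \<in> blists n \<Longrightarrow> length zs = n" by (simp add: blists_def)

lemma sum_blists_Suc2:
  "(\<Sum>xs\<in>blists (Suc n). \<Sum>ys\<in>blists (Suc n). f xs ys) =
   (\<Sum>xs\<in>blists n. \<Sum>ys\<in>blists n. f (xs@[False]) (ys@[False]) + f (xs@[False]) (ys@[True])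
        + f (xs@[True]) (ys@[False]) + f (xs@[True]) (ys@[True]))"
  unfolding sum_blists_Suc by (simp add: sum.distrib algebra_simps)

definition last_out :: "bool list \<Rightarrow> bool" where "last_out ys = prev_out ys (length ys)"

lemma last_out_snoc[simp]: "last_out (ys @ [y]) = y" by (simp add: last_out_def prev_out_def nth_append)
lemma last_out_Nil[simp]: "last_out [] = False" by (simp add: last_out_def prev_out_def)

lemma chan_prob_snoc:
  assumes "length xs = length ys"
  shows "chan_prob a b (xs @ [x]) (ys @ [y]) = chan_prob a b xs ys * post_W a b (last_out ys) x y"
proof -
  have "chan_prob a b (xs @ [x]) (ys @ [y]) =
     (\<Prod>i<length xs. post_W a b (prev_out (ys@[y]) i) ((xs@[x]) ! i) ((ys@[y]) ! i)) *
       post_W a b (prev_out (ys@[y]) (length xs)) x y"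
    unfolding chan_prob_def using assms by (simp add: nth_append)
  also have "(\<Prod>i<length xs. post_W a b (prev_out (ys@[y]) i) ((xs@[x]) ! i) ((ys@[y]) ! i))
      = chan_prob a b xs ys"
    unfolding chan_prob_def using assms
    by (intro prod.cong) (auto simp: nth_append prev_out_def)
  also have "prev_out (ys@[y]) (length xs) = last_out ys"
    using assms by (simp add: last_out_def prev_out_def nth_append)
  finally show ?thesis .
qed

lemma chan_prob_Nil[simp]: "chan_prob a b [] ys = 1" by (simp add: chan_prob_def)

lemma enc_prob_snoc:
  assumes "length xs = length ys"
  shows "enc_prob q (xs @ [x]) (ys @ [y]) = enc_prob q xs ys * (if x then q xs ys else 1 - q xs ys)"
proof -
  define F where "F = (\<lambda>i. if (xs@[x]) ! i then q (take i (xs@[x])) (take i (ys@[y]))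
          else 1 - q (take i (xs@[x])) (take i (ys@[y])))"
  have "enc_prob q (xs @ [x]) (ys @ [y]) = (\<Prod>i<Suc (length xs). F i)"
    unfolding enc_prob_def F_def by simp
  also have "\<dots> = (\<Prod>i<length xs. F i) * F (length xs)" by (rule prod.lessThan_Suc)
  also have "take (length xs) (ys@[y]) = ys" using assms by simp
  hence "F (length xs) = (if x then q xs ys else 1 - q xs ys)"
    unfolding F_def by (simp only: nth_append_length take_append) simp
  also have "(\<Prod>i<length xs. F i) = enc_prob q xs ys"
    unfolding enc_prob_def F_def using assms by (intro prod.cong) (auto simp: nth_append)
  finally show ?thesis .
qed

lemma enc_prob_Nil[simp]: "enc_prob q [] ys = 1" by (simp add: enc_prob_def)

definition markov_kernel :: "real \<Rightarrow> bool \<Rightarrow> bool \<Rightarrow> real" where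
  "markov_kernel g s y = (if y = s then g / (1 + g) else 1 / (1 + g))"

definition markov_prob :: "real \<Rightarrow> bool list \<Rightarrow> real" where
  "markov_prob g ys = (\<Prod>i<length ys. markov_kernel g (prev_out ys i) (ys ! i))"

lemma markov_prob_snoc: "markov_prob g (ys @ [y]) = markov_prob g ys * markov_kernel g (last_out ys) y"
proof -
  have "markov_prob g (ys @ [y]) = (\<Prod>i<length ys. markov_kernel g (prev_out (ys@[y]) i) ((ys@[y]) ! i))
      * markov_kernel g (prev_out (ys@[y]) (length ys)) y"
    unfolding markov_prob_def by simp
  also have "(\<Prod>i<length ys. markov_kernel g (prev_out (ys@[y]) i) ((ys@[y]) ! i)) = markov_prob g ys"
    unfolding markov_prob_def by (intro prod.cong) (auto simp: nth_append prev_out_def)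
  also have "prev_out (ys@[y]) (length ys) = last_out ys" by (simp add: last_out_def prev_out_def nth_append)
  finally show ?thesis .
qed

lemma markov_prob_Nil[simp]: "markov_prob g [] = 1" by (simp add: markov_prob_def)

lemma log_mult_divide: "log 2 ((c * w) / (q * r)) = log 2 (c / q) + log 2 (w / r)"
  if "c > 0" "w > 0" "q > 0" "r > 0" for c w q r :: real
proof -
  have "(c * w) / (q * r) = (c / q) * (w / r)" by simp
  hence "log 2 ((c * w) / (q * r)) = log 2 ((c / q) * (w / r))" by (simp only:)
  also have "\<dots> = log 2 (c / q) + log 2 (w / r)" using that by (simp only: log_mult) simp
  finally show ?thesis .
qed

lemma log2_le_minus_one: "z > 0 \<Longrightarrow> log 2 z \<le> (z - 1) / ln 2"
  unfolding log_def using ln_le_minus_one[of z] by (simp add: divide_right_mono)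

lemma info_term_le:
  fixes E ch Q out :: real
  assumes "E \<ge> 0" "ch > 0" "Q > 0" "out \<ge> E * ch"
  shows "info_term (E * ch) (E * out) \<le> E * ch * log 2 (ch / Q) + E * ch * (Q / out - 1) / ln 2"
proof (cases "E = 0")
  case True thus ?thesis by (simp add: info_term_def)
next
  case False
  hence E: "E > 0" using assms by simp
  hence o: "out > 0" using assms by (smt (verit) mult_pos_pos)
  have "info_term (E * ch) (E * out) = E * ch * log 2 (ch / out)"
    using E assms by (simp add: info_term_def)
  also have "ch / out = (ch / Q) * (Q / out)" using assms by simp
  hence "log 2 (ch / out) = log 2 (ch / Q) + log 2 (Q / out)"
    using assms o by (simp only: log_mult) simp
  also have "E * ch * (log 2 (ch / Q) + log 2 (Q / out)) \<le> E * ch * (log 2 (ch / Q) + (Q / out - 1) / ln 2)"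
    using log2_le_minus_one[of "Q / out"] assms o E by (intro mult_left_mono add_left_mono) auto
  finally show ?thesis by (simp add: algebra_simps)
qed

definition markov_policy :: "real \<Rightarrow> bool list \<Rightarrow> bool list \<Rightarrow> real" where
  "markov_policy pp xs ys = (if last_out ys then 1 - pp else pp)"

definition vec_mat :: "(bool \<Rightarrow> real) \<Rightarrow> (bool \<Rightarrow> bool \<Rightarrow> real) \<Rightarrow> bool \<Rightarrow> real" where
  "vec_mat v N = (\<lambda>j. v False * N False j + v True * N True j)"

definition forward :: "(bool \<Rightarrow> real) \<Rightarrow> (bool \<Rightarrow> bool \<Rightarrow> bool \<Rightarrow> real)
    \<Rightarrow> bool list \<Rightarrow> bool \<Rightarrow> real" where
  "forward u M xs = foldl (\<lambda>v x. vec_mat v (M x)) u xs"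

lemma forward_snoc: "forward u M (xs @ [x]) = vec_mat (forward u M xs) (M x)" by (simp add: forward_def)
lemma forward_Nil[simp]: "forward u M [] = u" by (simp add: forward_def)

lemma forward_nonneg:
  assumes "\<And>j. u j \<ge> 0" "\<And>x i j. M x i j \<ge> 0"
  shows "forward u M xs j \<ge> 0"
  using assms(1)
proof (induction xs arbitrary: u j rule: rev_induct)
  case Nil thus ?case by simp
next
  case (snoc x xs)
  have "\<And>j. forward u M xs j \<ge> 0" using snoc by blast
  thus ?case using assms(2) by (simp add: forward_snoc vec_mat_def)
qed

lemma quadratic_nonpos_between_roots:
  fixes A B C D x :: real
  assumes "A > 0" "D = B^2 - 4*A*C" "D \<ge> 0" "(B - sqrt D)/(2*A) \<le> x" "x \<le> (B + sqrt D)/(2*A)"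
  shows "A*x^2 - B*x + C \<le> 0"
proof -
  have "B - sqrt D \<le> 2*A*x" "2*A*x \<le> B + sqrt D" 
    using assms by (simp_all add: pos_divide_le_eq pos_le_divide_eq mult.commute)
  hence "\<bar>2*A*x - B\<bar> \<le> sqrt D" by linarith
  hence "\<bar>2*A*x - B\<bar>^2 \<le> (sqrt D)^2" by (intro power_mono) auto
  hence "(2*A*x - B)^2 \<le> D" using assms by simp
  hence "4*A*(A*x^2 - B*x + C) \<le> 0" using assms(2) by (simp add: algebra_simps power2_eq_square)
  thus ?thesis using assms by (simp add: mult_le_0_iff)
qed

lemma quadratic_nonneg_above_roots:
  fixes A B C D x :: real
  assumes "A > 0" "D = B^2 - 4*A*C" "D \<ge> 0" "(B + sqrt D)/(2*A) \<le> x"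
  shows "A*x^2 - B*x + C \<ge> 0"
proof -
  have "sqrt D \<le> 2*A*x - B" using assms by (simp add: pos_divide_le_eq mult.commute)
  hence "(sqrt D)^2 \<le> (2*A*x - B)^2" using assms(3) by (intro power_mono) auto
  hence "D \<le> (2*A*x - B)^2" using assms by simp
  hence "4*A*(A*x^2 - B*x + C) \<ge> 0" using assms(2) by (simp add: algebra_simps power2_eq_square)
  thus ?thesis using assms by (simp add: zero_le_mult_iff)
qed

lemma quadratic_nonneg_below_roots:
  fixes A B C D x :: real
  assumes "A > 0" "D = B^2 - 4*A*C" "D \<ge> 0" "x \<le> (B - sqrt D)/(2*A)"
  shows "A*x^2 - B*x + C \<ge> 0"
proof -
  have "sqrt D \<le> B - 2*A*x" using assms by (simp add: pos_le_divide_eq mult.commute)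
  hence "(sqrt D)^2 \<le> (B - 2*A*x)^2" using assms(3) by (intro power_mono) auto
  hence "D \<le> (B - 2*A*x)^2" using assms by simp
  hence "4*A*(A*x^2 - B*x + C) \<ge> 0" using assms(2) by (simp add: algebra_simps power2_eq_square)
  thus ?thesis using assms by (simp add: zero_le_mult_iff)
qed

locale post_setting =
  fixes a b g :: real
  assumes a0: "0 < a" and a1: "a < 1" and b0: "0 < b" and b1: "b < 1" and ab: "a + b > 1"
    and g0: "g > 0"
begin

lemma post_W_pos: "post_W a b s x y > 0"
  using a0 a1 b0 b1 unfolding post_W_def Let_def by auto

lemma post_W_sum: "post_W a b s x False + post_W a b s x True = 1"
  unfolding post_W_def Let_def by auto

lemma post_W_True: "post_W a b s x True = 1 - post_W a b s x False"
  using post_W_sum[of s x] by linarith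

lemma markov_kernel_pos: "markov_kernel g s y > 0" using g0 unfolding markov_kernel_def by auto
lemma markov_kernel_sum: "markov_kernel g s False + markov_kernel g s True = 1" 
  using g0 unfolding markov_kernel_def by (auto simp: field_simps)

lemma chan_prob_pos: "chan_prob a b xs ys > 0"
  unfolding chan_prob_def by (rule prod_pos) (use post_W_pos in auto)

lemma markov_prob_pos: "markov_prob g ys > 0"
  unfolding markov_prob_def by (rule prod_pos) (use markov_kernel_pos in auto)

lemma sum_chan_prob: "length xs = n \<Longrightarrow> (\<Sum>ys\<in>blists n. chan_prob a b xs ys) = 1"
proof (induction n arbitrary: xs)
  case 0 thus ?case by simp
next
  case (Suc n)
  then obtain xs' x where xs: "xs = xs' @ [x]" and l: "length xs' = n"
    by (metis length_Suc_conv_rev)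
  have "(\<Sum>ys\<in>blists (Suc n). chan_prob a b xs ys)
     = (\<Sum>ys\<in>blists n. chan_prob a b xs' ys * (post_W a b (last_out ys) x False + post_W a b (last_out ys) x True))"
    unfolding sum_blists_Suc xs
    by (intro sum.cong refl) (simp add: chan_prob_snoc l length_blists algebra_simps)
  also have "\<dots> = (\<Sum>ys\<in>blists n. chan_prob a b xs' ys)" by (simp add: post_W_sum)
  finally show ?case using Suc.IH[OF l] by simp
qed

lemma sum_markov_prob: "(\<Sum>ys\<in>blists n. markov_prob g ys) = 1"
proof (induction n)
  case 0 thus ?case by simp
next
  case (Suc n)
  have "(\<Sum>ys\<in>blists (Suc n). markov_prob g ys)
      = (\<Sum>ys\<in>blists n. markov_prob g ys
        * (markov_kernel g (last_out ys) False + markov_kernel g (last_out ys) True))"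
    unfolding sum_blists_Suc by (intro sum.cong refl) (simp add: markov_prob_snoc algebra_simps)
  thus ?case using Suc.IH by (simp add: markov_kernel_sum)
qed

definition kernel_div :: "bool \<Rightarrow> bool \<Rightarrow> real" where
  "kernel_div s x = post_W a b s x False * log 2 (post_W a b s x False / markov_kernel g s False)
          + post_W a b s x True * log 2 (post_W a b s x True / markov_kernel g s True)"

lemma sum_chan_log_ratio:
  assumes D: "\<And>s x. kernel_div s x = C"
  shows "length xs = n \<Longrightarrow>
    (\<Sum>ys\<in>blists n. chan_prob a b xs ys * log 2 (chan_prob a b xs ys / markov_prob g ys)) = n * C"
proof (induction n arbitrary: xs)
  case 0 thus ?case by simp
next
  case (Suc n)
  then obtain xs' x where xs: "xs = xs' @ [x]" and l: "length xs' = n"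
    by (metis length_Suc_conv_rev)
  have "(\<Sum>ys\<in>blists (Suc n). chan_prob a b xs ys * log 2 (chan_prob a b xs ys / markov_prob g ys))
     = (\<Sum>ys\<in>blists n. chan_prob a b xs' ys * log 2 (chan_prob a b xs' ys / markov_prob g ys) *
            (post_W a b (last_out ys) x False + post_W a b (last_out ys) x True)
          + chan_prob a b xs' ys * kernel_div (last_out ys) x)"
    unfolding sum_blists_Suc xs kernel_div_def
    by (intro sum.cong refl) (simp add: chan_prob_snoc l length_blists markov_prob_snoc log_mult_divide
        chan_prob_pos markov_prob_pos post_W_pos markov_kernel_pos algebra_simps)
  also have "\<dots> = (\<Sum>ys\<in>blists n. chan_prob a b xs' ys * log 2 (chan_prob a b xs' ys / markov_prob g ys))
       + C * (\<Sum>ys\<in>blists n. chan_prob a b xs' ys)"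
    by (simp add: post_W_sum D sum.distrib sum_distrib_left algebra_simps)
  also have "\<dots> = n * C + C" using Suc.IH[OF l] sum_chan_prob[OF l] by simp
  finally show ?case by (simp add: algebra_simps)
qed

lemma enc_prob_nonneg: "fb_policy q \<Longrightarrow> enc_prob q xs ys \<ge> 0"
  unfolding enc_prob_def fb_policy_def by (rule prod_nonneg) auto

lemma sum_enc_chan: "(\<Sum>xs\<in>blists n. \<Sum>ys\<in>blists n. enc_prob q xs ys * chan_prob a b xs ys) = 1"
proof (induction n)
  case 0 thus ?case by simp
next
  case (Suc n)
  have "(\<Sum>xs\<in>blists (Suc n). \<Sum>ys\<in>blists (Suc n). enc_prob q xs ys * chan_prob a b xs ys)
      = (\<Sum>xs\<in>blists n. \<Sum>ys\<in>blists n. enc_prob q xs ys * chan_prob a b xs ys)"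
    unfolding sum_blists_Suc2
    by (intro sum.cong refl) (simp add: enc_prob_snoc chan_prob_snoc length_blists post_W_True
        algebra_simps)
  thus ?case using Suc.IH by simp
qed

lemma sum_enc_chan_log_ratio:
  assumes D: "\<And>s x. kernel_div s x = C"
  shows "(\<Sum>xs\<in>blists n. \<Sum>ys\<in>blists n. enc_prob q xs ys * chan_prob a b xs ys *
            log 2 (chan_prob a b xs ys / markov_prob g ys)) = n * C"
proof (induction n)
  case 0 thus ?case by simp
next
  case (Suc n)
  let ?E = "\<lambda>xs ys. enc_prob q xs ys * chan_prob a b xs ys"
  let ?L = "\<lambda>xs ys. log 2 (chan_prob a b xs ys / markov_prob g ys)"
  have step: "?E (xs@[False]) (ys@[False]) * ?L (xs@[False]) (ys@[False]) +
          ?E (xs@[False]) (ys@[True]) * ?L (xs@[False]) (ys@[True]) +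
          ?E (xs@[True]) (ys@[False]) * ?L (xs@[True]) (ys@[False]) +
          ?E (xs@[True]) (ys@[True]) * ?L (xs@[True]) (ys@[True])
        = ?E xs ys * ?L xs ys + C * ?E xs ys"
    if "xs \<in> blists n" "ys \<in> blists n" for xs ys
  proof -
    have l: "length xs = length ys" using that by (simp add: length_blists)
    define e where "e = q xs ys"
    define s where "s = last_out ys"
    have "\<And>x y. ?E (xs@[x]) (ys@[y]) * ?L (xs@[x]) (ys@[y]) =
       ?E xs ys * ((if x then e else 1 - e) * post_W a b s x y)
         * (?L xs ys + log 2 (post_W a b s x y / markov_kernel g s y))"
      by (simp add: enc_prob_snoc[OF l] chan_prob_snoc[OF l] markov_prob_snoc log_mult_divide
          chan_prob_pos markov_prob_pos post_W_pos markov_kernel_pos e_def s_def)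
    moreover have "?E xs ys * ?L xs ys + C * ?E xs ys =
       ?E xs ys * ?L xs ys * ((1-e) * (post_W a b s False False + post_W a b s False True)
                              + e * (post_W a b s True False + post_W a b s True True))
       + ?E xs ys * ((1 - e) * kernel_div s False + e * kernel_div s True)"
      by (simp add: post_W_sum D algebra_simps)
    ultimately show ?thesis unfolding kernel_div_def by (simp add: algebra_simps)
  qed
  have "(\<Sum>xs\<in>blists (Suc n). \<Sum>ys\<in>blists (Suc n). ?E xs ys * ?L xs ys)
      = (\<Sum>xs\<in>blists n. \<Sum>ys\<in>blists n. ?E xs ys * ?L xs ys + C * ?E xs ys)"
    unfolding sum_blists_Suc2 using step by (intro sum.cong refl) auto
  also have "\<dots> = n * C + C * (\<Sum>xs\<in>blists n. \<Sum>ys\<in>blists n. ?E xs ys)"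
    using Suc.IH by (simp add: sum.distrib sum_distrib_left)
  finally show ?case using sum_enc_chan[where n=n and q=q] by (simp add: algebra_simps)
qed

text \<open>Replacing the true output law by Q changes the sum by a term
  \<Sum> out (Q/out - 1) / ln 2 \<le> 0 (from ln z \<le> z - 1).\<close>

lemma info_sum_le:
  fixes E :: "bool list \<Rightarrow> bool list \<Rightarrow> real" and out :: "bool list \<Rightarrow> real" and C :: real
  assumes E0: "\<And>xs ys. E xs ys \<ge> 0"
    and S: "(\<Sum>xs\<in>blists n. \<Sum>ys\<in>blists n. E xs ys * chan_prob a b xs ys *
            log 2 (chan_prob a b xs ys / markov_prob g ys)) = n * C"
    and O: "\<And>ys. out ys = (\<Sum>xs\<in>blists n. E xs ys * chan_prob a b xs ys)"
    and O1: "(\<Sum>ys\<in>blists n. out ys) = 1"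
  shows "(\<Sum>xs\<in>blists n. \<Sum>ys\<in>blists n. info_term (E xs ys * chan_prob a b xs ys) (E xs ys * out ys))
      \<le> n * C"
proof -
  let ?c = "chan_prob a b"
  have oge: "out ys \<ge> E xs ys * ?c xs ys" if "xs \<in> blists n" for xs ys
  proof -
    have "E xs ys * ?c xs ys \<le> (\<Sum>xs\<in>blists n. E xs ys * ?c xs ys)"
      by (rule member_le_sum) (auto intro!: mult_nonneg_nonneg E0 less_imp_le[OF chan_prob_pos] that)
    thus ?thesis using O by simp
  qed
  have "(\<Sum>xs\<in>blists n. \<Sum>ys\<in>blists n. info_term (E xs ys * ?c xs ys) (E xs ys * out ys))
     \<le> (\<Sum>xs\<in>blists n. \<Sum>ys\<in>blists n. E xs ys * ?c xs ys * log 2 (?c xs ys / markov_prob g ys)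
            + E xs ys * ?c xs ys * (markov_prob g ys / out ys - 1) / ln 2)"
    by (intro sum_mono info_term_le) (use E0 chan_prob_pos markov_prob_pos oge in auto)
  also have "\<dots> = n * C + (\<Sum>xs\<in>blists n. \<Sum>ys\<in>blists n. E xs ys * ?c xs ys * (markov_prob g ys / out ys - 1))
      / ln 2"
    using S by (simp only: sum.distrib sum_divide_distrib)
  also have "(\<Sum>xs\<in>blists n. \<Sum>ys\<in>blists n. E xs ys * ?c xs ys * (markov_prob g ys / out ys - 1))
      = (\<Sum>ys\<in>blists n. \<Sum>xs\<in>blists n. E xs ys * ?c xs ys * (markov_prob g ys / out ys - 1))"
    by (rule sum.swap)
  also have "\<dots> = (\<Sum>ys\<in>blists n. (\<Sum>xs\<in>blists n. E xs ys * ?c xs ys) * (markov_prob g ys / out ys - 1))"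
    by (simp only: sum_distrib_right)
  also have "(\<Sum>ys\<in>blists n. (\<Sum>xs\<in>blists n. E xs ys * ?c xs ys) * (markov_prob g ys / out ys - 1))
       \<le> (\<Sum>ys\<in>blists n. markov_prob g ys - out ys)"
  proof (intro sum_mono)
    fix ys
    have "out ys * (markov_prob g ys / out ys - 1) \<le> markov_prob g ys - out ys"
      using markov_prob_pos[of ys] by (cases "out ys = 0") (auto simp: algebra_simps)
    thus "(\<Sum>xs\<in>blists n. E xs ys * ?c xs ys) * (markov_prob g ys / out ys - 1)
        \<le> markov_prob g ys - out ys"
      using O by simp
  qed
  also have "(\<Sum>ys\<in>blists n. markov_prob g ys - out ys) = 0" using O1 sum_markov_prob by (simp add: sum_subtractf)
  finally show ?thesis by (simp add: divide_right_mono)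
qed

lemma directed_info_fb_le:
  assumes D: "\<And>s x. kernel_div s x = C" and q: "fb_policy q"
  shows "directed_info_fb a b n q \<le> n * C"
  unfolding directed_info_fb_def
proof (rule info_sum_le[where E="enc_prob q" and out="out_fb a b n q" and n=n and C=C])
  show "\<And>xs ys. 0 \<le> enc_prob q xs ys" using enc_prob_nonneg q by auto
  show "(\<Sum>xs\<in>blists n. \<Sum>ys\<in>blists n. enc_prob q xs ys * chan_prob a b xs ys *
            log 2 (chan_prob a b xs ys / markov_prob g ys)) = n * C" by (rule sum_enc_chan_log_ratio[OF D])
  show "\<And>ys. out_fb a b n q ys = (\<Sum>xs\<in>blists n. enc_prob q xs ys * chan_prob a b xs ys)"
    by (simp add: out_fb_def)
  show "(\<Sum>ys\<in>blists n. out_fb a b n q ys) = 1"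
    unfolding out_fb_def using sum_enc_chan[where n=n and q=q] by (subst sum.swap) simp
qed

lemma sum_input_chan_log_ratio:
  assumes D: "\<And>s x. kernel_div s x = C" and p: "input_dist n p"
  shows "(\<Sum>xs\<in>blists n. \<Sum>ys\<in>blists n. p xs * chan_prob a b xs ys *
            log 2 (chan_prob a b xs ys / markov_prob g ys)) = n * C"
proof -
  have "(\<Sum>xs\<in>blists n. \<Sum>ys\<in>blists n. p xs * chan_prob a b xs ys
        * log 2 (chan_prob a b xs ys / markov_prob g ys))
      = (\<Sum>xs\<in>blists n. p xs * (\<Sum>ys\<in>blists n. chan_prob a b xs ys
        * log 2 (chan_prob a b xs ys / markov_prob g ys)))"
    by (simp add: sum_distrib_left mult.assoc)
  also have "\<dots> = (\<Sum>xs\<in>blists n. p xs * (n * C))"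
    by (intro sum.cong refl) (simp add: sum_chan_log_ratio[OF D] length_blists)
  also have "\<dots> = n * C" using p unfolding input_dist_def by (simp add: sum_distrib_right[symmetric])
  finally show ?thesis .
qed

lemma sum_out_nf:
  assumes p: "input_dist n p"
  shows "(\<Sum>ys\<in>blists n. out_nf a b n p ys) = 1"
proof -
  have "(\<Sum>ys\<in>blists n. out_nf a b n p ys) = (\<Sum>xs\<in>blists n. p xs * (\<Sum>ys\<in>blists n. chan_prob a b xs ys))"
    unfolding out_nf_def by (subst sum.swap) (simp add: sum_distrib_left mult.assoc)
  also have "\<dots> = (\<Sum>xs\<in>blists n. p xs)" by (intro sum.cong refl) (simp add: sum_chan_prob length_blists)
  finally show ?thesis using p unfolding input_dist_def by simp
qed

lemma mutual_info_nf_le: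
  assumes D: "\<And>s x. kernel_div s x = C" and p: "input_dist n p"
  shows "mutual_info_nf a b n p \<le> n * C"
proof -
  \<comment> \<open>p is only known to be nonnegative on blists n\<close>
  define p' where "p' = (\<lambda>xs. if xs \<in> blists n then p xs else 0)"
  have pp: "\<And>xs. xs \<in> blists n \<Longrightarrow> p' xs = p xs" by (simp add: p'_def)
  have "mutual_info_nf a b n p = (\<Sum>xs\<in>blists n. \<Sum>ys\<in>blists n.
        info_term ((\<lambda>xs ys. p' xs) xs ys * chan_prob a b xs ys)
          ((\<lambda>xs ys. p' xs) xs ys * out_nf a b n p ys))"
    unfolding mutual_info_nf_def by (intro sum.cong refl) (simp add: pp)
  also have "\<dots> \<le> n * C"
  proof (rule info_sum_le[where E="\<lambda>xs ys. p' xs" and out="out_nf a b n p" and n=n and C=C])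
    show "\<And>xs ys. 0 \<le> p' xs" using p unfolding input_dist_def p'_def by auto
    show "(\<Sum>xs\<in>blists n. \<Sum>ys\<in>blists n. p' xs * chan_prob a b xs ys
          * log 2 (chan_prob a b xs ys / markov_prob g ys)) = n * C"
      using sum_input_chan_log_ratio[OF D p] by (simp add: pp)
    show "\<And>ys. out_nf a b n p ys = (\<Sum>xs\<in>blists n. p' xs * chan_prob a b xs ys)"
      unfolding out_nf_def by (intro sum.cong refl) (simp add: pp)
    show "(\<Sum>ys\<in>blists n. out_nf a b n p ys) = 1" by (rule sum_out_nf[OF p])
  qed
  finally show ?thesis .
qed

lemma out_fb_markov_policy:
  assumes pp: "\<And>s y. (1 - (if s then 1 - pp else pp)) * post_W a b s False y
                    + (if s then 1 - pp else pp) * post_W a b s True y = markov_kernel g s y"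
  shows "length ys = n \<Longrightarrow> out_fb a b n (markov_policy pp) ys = markov_prob g ys"
proof (induction n arbitrary: ys)
  case 0 thus ?case by (simp add: out_fb_def)
next
  case (Suc n)
  then obtain ys' y where ys: "ys = ys' @ [y]" and l: "length ys' = n"
    by (metis length_Suc_conv_rev)
  have "out_fb a b (Suc n) (markov_policy pp) ys =
     (\<Sum>xs\<in>blists n. enc_prob (markov_policy pp) xs ys' * chan_prob a b xs ys' * markov_kernel g (last_out ys') y)"
    unfolding out_fb_def sum_blists_Suc ys
    by (intro sum.cong refl) (simp add: enc_prob_snoc chan_prob_snoc l length_blists markov_policy_def
        algebra_simps flip: pp)
  also have "\<dots> = out_fb a b n (markov_policy pp) ys' * markov_kernel g (last_out ys') y"
    unfolding out_fb_def by (simp add: sum_distrib_right)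
  finally show ?case using Suc.IH[OF l] by (simp add: ys markov_prob_snoc)
qed

lemma info_term_markov_prob:
  fixes E :: "bool list \<Rightarrow> bool list \<Rightarrow> real"
  assumes "E xs ys \<ge> 0"
  shows "info_term (E xs ys * chan_prob a b xs ys) (E xs ys * markov_prob g ys)
       = E xs ys * chan_prob a b xs ys * log 2 (chan_prob a b xs ys / markov_prob g ys)"
proof (cases "E xs ys = 0")
  case True thus ?thesis by (simp add: info_term_def)
next
  case False thus ?thesis using chan_prob_pos[of xs ys] markov_prob_pos[of ys] by (simp add: info_term_def)
qed

lemma directed_info_fb_markov_policy:
  assumes D: "\<And>s x. kernel_div s x = C" and pi01: "0 \<le> pp" "pp \<le> 1"
    and pp: "\<And>s y. (1 - (if s then 1 - pp else pp)) * post_W a b s False y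
                    + (if s then 1 - pp else pp) * post_W a b s True y = markov_kernel g s y"
  shows "fb_policy (markov_policy pp)" "directed_info_fb a b n (markov_policy pp) = n * C"
proof -
  show fb: "fb_policy (markov_policy pp)" using pi01 by (simp add: fb_policy_def markov_policy_def)
  have "directed_info_fb a b n (markov_policy pp) = (\<Sum>xs\<in>blists n. \<Sum>ys\<in>blists n.
       enc_prob (markov_policy pp) xs ys * chan_prob a b xs ys * log 2 (chan_prob a b xs ys / markov_prob g ys))"
    unfolding directed_info_fb_def
    by (intro sum.cong refl) (simp add: out_fb_markov_policy[OF pp] length_blists
        info_term_markov_prob enc_prob_nonneg[OF fb])
  also have "\<dots> = n * C" by (rule sum_enc_chan_log_ratio[OF D])
  finally show "directed_info_fb a b n (markov_policy pp) = n * C" .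
qed

lemma sum_forward:
  assumes row: "\<And>i. M False i False + M False i True + M True i False + M True i True = 1"
  shows "(\<Sum>xs\<in>blists n. forward v M xs False + forward v M xs True) = v False + v True"
proof (induction n)
  case 0 thus ?case by simp
next
  case (Suc n)
  have "(\<Sum>xs\<in>blists (Suc n). forward v M xs False + forward v M xs True)
     = (\<Sum>xs\<in>blists n. forward v M xs False * (M False False False + M False False True
          + M True False False + M True False True)
          + forward v M xs True * (M False True False + M False True True + M True True False + M True True True))"
    unfolding sum_blists_Suc by (intro sum.cong refl) (simp add: forward_snoc vec_mat_def algebra_simps)
  also have "\<dots> = (\<Sum>xs\<in>blists n. forward v M xs False + forward v M xs True)" by (simp add: row)
  finally show ?case using Suc.IH by simp
qed

lemma sum_forward_chan_prob:
  assumes it: "\<And>s y j. post_W a b s False y * vec_mat (w s) (M False) j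
        + post_W a b s True y * vec_mat (w s) (M True) j
      = markov_kernel g s y * w y j"
  shows "length ys = n \<Longrightarrow> (\<Sum>xs\<in>blists n. forward (w False) M xs j * chan_prob a b xs ys)
      = markov_prob g ys * w (last_out ys) j"
proof (induction n arbitrary: ys j)
  case 0 thus ?case by simp
next
  case (Suc n)
  then obtain ys' y where ys: "ys = ys' @ [y]" and l: "length ys' = n"
    by (metis length_Suc_conv_rev)
  let ?F = "\<lambda>k. (\<Sum>xs\<in>blists n. forward (w False) M xs k * chan_prob a b xs ys')"
  have "(\<Sum>xs\<in>blists (Suc n). forward (w False) M xs j * chan_prob a b xs ys) =
      (\<Sum>xs\<in>blists n. post_W a b (last_out ys') False y
        * (forward (w False) M xs False * chan_prob a b xs ys' * M False False j
             + forward (w False) M xs True * chan_prob a b xs ys' * M False True j)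
        + post_W a b (last_out ys') True y * (forward (w False) M xs False * chan_prob a b xs ys' * M True False j
             + forward (w False) M xs True * chan_prob a b xs ys' * M True True j))"
    unfolding sum_blists_Suc ys
    by (intro sum.cong refl)
      (simp add: chan_prob_snoc l length_blists forward_snoc vec_mat_def algebra_simps)
  also have "\<dots> = post_W a b (last_out ys') False y * (?F False * M False False j + ?F True * M False True j)
       + post_W a b (last_out ys') True y * (?F False * M True False j + ?F True * M True True j)"
    by (simp only: distrib_left sum.distrib sum_distrib_left sum_distrib_right mult.assoc)
  also have "\<dots> = markov_prob g ys' * (post_W a b (last_out ys') False y * vec_mat (w (last_out ys')) (M False) j
       + post_W a b (last_out ys') True y * vec_mat (w (last_out ys')) (M True) j)"
    using Suc.IH[OF l] by (simp add: vec_mat_def algebra_simps)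
  also have "\<dots> = markov_prob g ys * w (last_out ys) j" by (simp add: it ys markov_prob_snoc)
  finally show ?case .
qed

lemma hmm_input_achieves:
  assumes D: "\<And>s x. kernel_div s x = C"
    and it: "\<And>s y j. post_W a b s False y * vec_mat (w s) (M False) j
        + post_W a b s True y * vec_mat (w s) (M True) j
      = markov_kernel g s y * w y j"
    and row: "\<And>i. M False i False + M False i True + M True i False + M True i True = 1"
    and tot: "\<And>s. w s False + w s True = 1"
    and wn: "\<And>j. w False j \<ge> 0" and Mn: "\<And>x i j. M x i j \<ge> 0"
  shows "\<exists>p. input_dist n p \<and> mutual_info_nf a b n p = n * C"
proof -
  define p where "p = (\<lambda>xs. forward (w False) M xs False + forward (w False) M xs True)"
  have pn: "\<And>xs. p xs \<ge> 0" unfolding p_def using forward_nonneg[OF wn Mn] by (simp add: add_nonneg_nonneg)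
  have ip: "input_dist n p" unfolding input_dist_def
    using pn sum_forward[where M=M and n=n and v="w False", OF row] tot[of False] by (simp add: p_def)
  have out: "out_nf a b n p ys = markov_prob g ys" if "length ys = n" for ys
  proof -
    have "out_nf a b n p ys = (\<Sum>xs\<in>blists n. forward (w False) M xs False * chan_prob a b xs ys)
            + (\<Sum>xs\<in>blists n. forward (w False) M xs True * chan_prob a b xs ys)"
      unfolding out_nf_def p_def by (simp add: sum.distrib algebra_simps)
    also have "\<dots> = markov_prob g ys * (w (last_out ys) False + w (last_out ys) True)"
      using sum_forward_chan_prob[OF it that] by (simp add: algebra_simps)
    finally show ?thesis using tot by simp
  qed
  have "mutual_info_nf a b n p = (\<Sum>xs\<in>blists n. \<Sum>ys\<in>blists n.
        p xs * chan_prob a b xs ys * log 2 (chan_prob a b xs ys / markov_prob g ys))"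
    unfolding mutual_info_nf_def
    using info_term_markov_prob[where E="\<lambda>xs ys. p xs"] pn
    by (intro sum.cong refl) (simp add: out length_blists)
  also have "\<dots> = n * C" by (rule sum_input_chan_log_ratio[OF D ip])
  finally show ?thesis using ip by blast
qed

lemma kernel_div_const:
  assumes gdef: "g = post_gamma a b"
  shows "kernel_div s x = kernel_div False False"
proof -
  define q0 where "q0 = g / (1 + g)"
  define q1 where "q1 = 1 / (1 + g)"
  have q0p: "q0 > 0" and q1p: "q1 > 0" using g0 by (auto simp: q0_def q1_def)
  have "q0 = g * q1" by (simp add: q0_def q1_def)
  hence lq: "log 2 q0 = log 2 g + log 2 q1" using g0 q1p by (simp add: log_mult)
  have lg: "log 2 g = (bin_ent b - bin_ent a) / (a + b - 1)"
    unfolding gdef post_gamma_def by simp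
  have dd: "a + b - 1 \<noteq> 0" using ab by simp
  have key: "(a + b - 1) * log 2 g = bin_ent b - bin_ent a" using lg dd by simp
  have Ha: "bin_ent a = - a * log 2 a - (1 - a) * log 2 (1 - a)" using a0 a1 by (simp add: bin_ent_def)
  have Hb: "bin_ent b = - b * log 2 b - (1 - b) * log 2 (1 - b)" using b0 b1 by (simp add: bin_ent_def)
  have pa: "a > 0" "1 - a > 0" "b > 0" "1 - b > 0" using a0 a1 b0 b1 by auto
  have DFF: "kernel_div False False = a * (log 2 a - log 2 q0) + (1-a) * (log 2 (1-a) - log 2 q1)"
    unfolding kernel_div_def post_W_def markov_kernel_def Let_def q0_def[symmetric] q1_def[symmetric]
    using pa q0p q1p by (simp add: log_divide)
  have DFT: "kernel_div False True = (1-b) * (log 2 (1-b) - log 2 q0) + b * (log 2 b - log 2 q1)"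
    unfolding kernel_div_def post_W_def markov_kernel_def Let_def q0_def[symmetric] q1_def[symmetric]
    using pa q0p q1p by (simp add: log_divide)
  have DTF: "kernel_div True False = kernel_div False True"
    unfolding kernel_div_def post_W_def markov_kernel_def Let_def by (simp add: algebra_simps)
  have DTT: "kernel_div True True = kernel_div False False"
    unfolding kernel_div_def post_W_def markov_kernel_def Let_def by (simp add: algebra_simps)
  have "kernel_div False True - kernel_div False False
      = (bin_ent a - bin_ent b) + (a + b - 1) * (log 2 q0 - log 2 q1)"
    unfolding DFF DFT Ha Hb by (simp add: algebra_simps)
  also have "\<dots> = 0" using lq key by (simp add: algebra_simps)
  finally have "kernel_div False True = kernel_div False False" by simp
  thus ?thesis using DTF DTT by (cases s; cases x) auto
qed

end

definition P1 :: "real \<Rightarrow> real \<Rightarrow> real \<Rightarrow> real \<Rightarrow> real"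
  where "P1 a b g be = (1-b)*be^2 - g*((1-a)+b)*be + a"
definition P2 :: "real \<Rightarrow> real \<Rightarrow> real \<Rightarrow> real \<Rightarrow> real"
  where "P2 a b g be = b*g*be^2 - (a+(1-b))*be + (1-a)*g"
definition P3 :: "real \<Rightarrow> real \<Rightarrow> real \<Rightarrow> real \<Rightarrow> real"
  where "P3 a b g be = a*be^2 - g*((1-a)+b)*be + (1-b)"
definition P4 :: "real \<Rightarrow> real \<Rightarrow> real \<Rightarrow> real \<Rightarrow> real"
  where "P4 a b g be = (1-a)*g*be^2 - (a+(1-b))*be + b*g"

text \<open>hmm_trans a b g be x i j is the probability of emitting input x and moving from hidden
  state i to j. The entries are the solution of the linear equations in hmm_trans_compatible
  and hmm_trans_row_sum; P1, ..., P4 are their numerators.\<close>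

definition hmm_trans :: "real \<Rightarrow> real \<Rightarrow> real \<Rightarrow> real \<Rightarrow> bool \<Rightarrow> bool \<Rightarrow> bool \<Rightarrow> real" where
  "hmm_trans a b g be x i j = (let c = 1 / ((1+g)*(a+b-1)*(be^2-1)) in
     (if \<not>x then (if \<not>i then (if \<not>j then c * P2 a b g be else - c * P1 a b g be)
                         else (if \<not>j then c * P3 a b g be else - c * P4 a b g be))
            else (if \<not>i then (if \<not>j then - c * P4 a b g be else c * P3 a b g be)
                         else (if \<not>j then - c * P1 a b g be else c * P2 a b g be))))"

definition hmm_init :: "real \<Rightarrow> bool \<Rightarrow> bool \<Rightarrow> real" where
  "hmm_init be s j = (if s = j then be / (1 + be) else 1 / (1 + be))"

lemma hmm_trans_compatible:
  fixes a b g be :: real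
  assumes "a + b > 1" "g > 0" "be > 1"
  shows "post_W a b s False y * vec_mat (hmm_init be s) (hmm_trans a b g be False) j
      + post_W a b s True y * vec_mat (hmm_init be s) (hmm_trans a b g be True) j
      = markov_kernel g s y * hmm_init be y j"
proof -
  have d: "a + b - 1 \<noteq> 0" "1 + g \<noteq> 0" "be^2 - 1 \<noteq> 0" "1 + be \<noteq> 0" 
    using assms by (auto simp: power2_eq_square)
     (smt (verit) mult_less_cancel_left1)
  show ?thesis using d
    by (cases s; cases y; cases j; simp add: post_W_def vec_mat_def markov_kernel_def hmm_init_def
        hmm_trans_def Let_def P1_def P2_def P3_def P4_def divide_simps;
        simp add: power2_eq_square algebra_simps)
qed

lemma hmm_trans_row_sum:
  fixes a b g be :: real
  assumes "a + b > 1" "g > 0" "be > 1"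
  shows "hmm_trans a b g be False i False + hmm_trans a b g be False i True
      + hmm_trans a b g be True i False + hmm_trans a b g be True i True = 1"
proof -
  have d: "a + b - 1 \<noteq> 0" "1 + g \<noteq> 0" "be^2 - 1 \<noteq> 0" using assms by (auto simp: power2_eq_square)
     (smt (verit) mult_less_cancel_left1)
  show ?thesis using d
    by (cases i; simp add: hmm_trans_def Let_def P1_def P2_def P3_def P4_def divide_simps;
        simp add: power2_eq_square algebra_simps)
qed

lemma hmm_trans_nonneg:
  fixes a b g be :: real
  assumes "a + b > 1" "g > 0" "be > 1"
    "P1 a b g be \<le> 0" "P2 a b g be \<ge> 0" "P3 a b g be \<ge> 0" "P4 a b g be \<le> 0"
  shows "hmm_trans a b g be x i j \<ge> 0"
proof -
  have "be^2 > 1" using assms by (smt (verit) one_less_power zero_less_numeral)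
  hence c: "(1+g)*(a+b-1)*(be^2-1) > 0" using assms by simp
  show ?thesis using c assms unfolding hmm_trans_def Let_def
    by (auto intro: divide_nonpos_pos divide_nonneg_pos)
qed

text \<open>For \<beta> = 1 the denominator of hmm_trans vanishes; then a memoryless uniform hidden
  state works.\<close>

definition hmm_trans_diag :: "bool \<Rightarrow> bool \<Rightarrow> bool \<Rightarrow> real"
  where "hmm_trans_diag x i j = (if i = j then 1/2 else 0)"
definition hmm_init_unif :: "bool \<Rightarrow> bool \<Rightarrow> real" where "hmm_init_unif s j = 1/2"

lemma hmm_trans_diag_compatible:
  fixes a b g :: real
  assumes "g > 0" "g * ((1-a)+b) = a + (1-b)" "a \<le> 1" "b > 0"
  shows "post_W a b s False y * vec_mat (hmm_init_unif s) (hmm_trans_diag False) j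
      + post_W a b s True y * vec_mat (hmm_init_unif s) (hmm_trans_diag True) j
      = markov_kernel g s y * hmm_init_unif y j"
proof -
  have nz: "(1-a)+b \<noteq> 0" using assms by simp
  have g: "g = (a + (1-b)) / ((1-a)+b)" "(1-a)+b \<noteq> 0" using assms nz by (auto simp: eq_divide_eq)
  have gp: "2 + g * 2 \<noteq> 0" using assms by simp
  show ?thesis using g gp
    by (cases s; cases y; cases j) (simp_all add: post_W_def vec_mat_def markov_kernel_def
        hmm_init_unif_def hmm_trans_diag_def Let_def divide_simps, simp_all add: algebra_simps)
qed

definition policy_bias :: "real \<Rightarrow> real \<Rightarrow> real \<Rightarrow> real" where
  "policy_bias a b g = (1 / (1 + g) - (1 - a)) / (a + b - 1)"

lemma policy_bias_out:
  fixes a b g :: real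
  assumes "a + b > 1" "g > 0"
  shows "(1 - (if s then 1 - policy_bias a b g else policy_bias a b g)) * post_W a b s False y
                    + (if s then 1 - policy_bias a b g else policy_bias a b g) * post_W a b s True y = markov_kernel g s y"
proof -
  have d: "a + b - 1 \<noteq> 0" "1 + g \<noteq> 0" using assms by auto
  show ?thesis using d
    by (cases s; cases y; simp add: post_W_def markov_kernel_def policy_bias_def Let_def divide_simps;
        simp add: algebra_simps)
qed

lemma policy_bias_bounds:
  fixes a b g :: real
  assumes "a + b > 1" "g > 0" "(1-a)*g \<le> a" "(1-b) \<le> b*g"
  shows "0 \<le> policy_bias a b g" "policy_bias a b g \<le> 1"
proof -
  have "1 - a \<le> 1 / (1+g)" using assms by (simp add: field_simps)
  thus "0 \<le> policy_bias a b g" using assms unfolding policy_bias_def by simp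
  have "1 / (1+g) \<le> b" using assms by (simp add: field_simps)
  hence "1 / (1+g) - (1 - a) \<le> 1 * (a + b - 1)" by simp
  thus "policy_bias a b g \<le> 1" using assms unfolding policy_bias_def by (subst divide_le_eq) simp
qed

lemma P2_nonneg_if_P1_nonpos:
  fixes a b g be :: real
  assumes "0<a" "a<1" "0<b" "b<1" "g>0" "be \<ge> 1" "(1-a)*g \<le> (1-b)*be" "P1 a b g be \<le> 0"
  shows "P2 a b g be \<ge> 0"
proof -
  have id: "(1-a)*g*P1 a b g be + (1-b)*P2 a b g be = ((1-b)*be - (1-a)*g) * (g*((1-a)+b)*be - (a+(1-b)))"
    unfolding P1_def P2_def by (simp add: algebra_simps power2_eq_square)
  have "be^2 \<ge> 1" using assms by (simp add: one_le_power)
  hence "(1-b)*be^2 \<ge> (1-b)" using assms by simp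
  hence "g*((1-a)+b)*be - (a+(1-b)) \<ge> 0" using assms(8) unfolding P1_def by linarith
  hence "((1-b)*be - (1-a)*g) * (g*((1-a)+b)*be - (a+(1-b))) \<ge> 0" using assms by simp
  moreover have "(1-a)*g*P1 a b g be \<le> 0" using assms by (simp add: mult_nonneg_nonpos)
  ultimately have "(1-b)*P2 a b g be \<ge> 0" using id by linarith
  thus ?thesis using assms by (simp add: zero_le_mult_iff)
qed

lemma P1_nonpos_if_P2_nonneg:
  fixes a b g be :: real
  assumes "0<a" "a<1" "0<b" "b<1" "g>0" "be \<ge> 1" "(1-b)*be \<le> (1-a)*g" "P2 a b g be \<ge> 0"
  shows "P1 a b g be \<le> 0"
proof -
  have id: "(1-a)*g*P1 a b g be + (1-b)*P2 a b g be = ((1-b)*be - (1-a)*g) * (g*((1-a)+b)*be - (a+(1-b)))"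
    unfolding P1_def P2_def by (simp add: algebra_simps power2_eq_square)
  have p2: "g*(b*be^2 + (1-a)) \<ge> (a+(1-b))*be" using assms(8) unfolding P2_def by (simp add: algebra_simps)
  have "be^2 \<ge> 1" using assms by (simp add: one_le_power)
  have s: "((1-a)+b)*be \<ge> 0" using assms by simp
  have e1: "(g*((1-a)+b)*be - (a+(1-b))) * (b*be^2 + (1-a))
      = ((1-a)+b)*be * (g*(b*be^2 + (1-a))) - (a+(1-b))*(b*be^2 + (1-a))" by (simp add: algebra_simps)
  have e2: "((1-a)+b)*be * (g*(b*be^2 + (1-a))) \<ge> ((1-a)+b)*be * ((a+(1-b))*be)"
    using mult_left_mono[OF p2 s] .
  have e3: "((1-a)+b)*be * ((a+(1-b))*be) - (a+(1-b))*(b*be^2 + (1-a)) = (a+(1-b))*(1-a)*(be^2 - 1)"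
    by (simp add: algebra_simps power2_eq_square)
  have e4: "(a+(1-b))*(1-a)*(be^2 - 1) \<ge> 0" using assms \<open>be^2 \<ge> 1\<close> by simp
  have "(g*((1-a)+b)*be - (a+(1-b))) * (b*be^2 + (1-a)) \<ge> 0" using e1 e2 e3 e4 by linarith
  moreover have "b*be^2 + (1-a) > 0" using assms by (simp add: add_nonneg_pos)
  ultimately have "g*((1-a)+b)*be - (a+(1-b)) \<ge> 0" by (simp add: zero_le_mult_iff)
  hence "((1-b)*be - (1-a)*g) * (g*((1-a)+b)*be - (a+(1-b))) \<le> 0" using assms by (simp add: mult_nonpos_nonneg)
  moreover have "(1-b)*P2 a b g be \<ge> 0" using assms by simp
  ultimately have "(1-a)*g*P1 a b g be \<le> 0" using id by linarith
  moreover have "(1-a)*g > 0" using assms by simp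
  ultimately show ?thesis by (smt (verit) mult_pos_pos)
qed

lemma P4_nonpos_if_P3_nonneg:
  fixes a b g be :: real
  assumes "0<a" "a<1" "0<b" "b<1" "g>0" "be \<ge> 1" "a*be \<le> b*g" "P3 a b g be \<ge> 0"
  shows "P4 a b g be \<le> 0"
proof -
  have p3: "g*((1-a)+b)*be \<le> a*be^2 + (1-b)" using assms(8) unfolding P3_def by simp
  have s: "((1-a)+b)*be > 0" using assms by simp
  have "a*((1-a)+b)*be^2 = (a*be)*(((1-a)+b)*be)" by (simp add: power2_eq_square algebra_simps)
  also have "\<dots> \<le> (b*g)*(((1-a)+b)*be)" using mult_right_mono[OF assms(7)] s by simp
  also have "\<dots> = b*(g*((1-a)+b)*be)" by (simp add: algebra_simps)
  also have "\<dots> \<le> b*(a*be^2 + (1-b))" using p3 assms by simp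
  finally have k: "a*(1-a)*be^2 \<le> b*(1-b)" by (simp add: algebra_simps)
  have q: "(1-a)*be^2 + b \<ge> 0" using assms by simp
  have "((1-a)+b)*be * P4 a b g be = (g*((1-a)+b)*be)*((1-a)*be^2 + b) - (a+(1-b))*((1-a)+b)*be^2"
    unfolding P4_def by (simp add: algebra_simps power2_eq_square)
  also have "\<dots> \<le> (a*be^2 + (1-b))*((1-a)*be^2 + b) - (a+(1-b))*((1-a)+b)*be^2"
    using mult_right_mono[OF p3 q] by linarith
  also have "\<dots> = - (be^2 - 1)*(b*(1-b) - a*(1-a)*be^2)" by (simp add: algebra_simps power2_eq_square)
  also have "\<dots> \<le> 0"
  proof -
    have "be^2 \<ge> 1" using assms by (simp add: one_le_power)
    thus ?thesis using k by (intro mult_nonpos_nonneg) auto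
  qed
  finally show ?thesis using s by (smt (verit) mult_pos_pos)
qed

lemma P3_nonneg_if_P4_nonpos:
  fixes a b g be :: real
  assumes "0<a" "a<1" "0<b" "b<1" "g>0" "be \<ge> 1" "b*g \<le> a*be" "P4 a b g be \<le> 0"
  shows "P3 a b g be \<ge> 0"
proof -
  have s: "((1-a)+b)*be > 0" using assms by simp
  have "g*((1-a)+b)*be \<le> a*be^2 + (1-b)"
  proof (cases "a*(1-a)*be^2 \<ge> b*(1-b)")
    case True
    have p4: "g*((1-a)*be^2 + b) \<le> (a+(1-b))*be" using assms(8) unfolding P4_def by (simp add: algebra_simps)
    have q: "(1-a)*be^2 + b > 0" using assms by (simp add: add_nonneg_pos)
    have "(g*((1-a)+b)*be)*((1-a)*be^2 + b) = (((1-a)+b)*be) * (g*((1-a)*be^2 + b))" by (simp add: algebra_simps)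
    also have "\<dots> \<le> (((1-a)+b)*be) * ((a+(1-b))*be)" using mult_left_mono[OF p4] s by simp
    also have "\<dots> = (a*be^2 + (1-b))*((1-a)*be^2 + b) - (be^2 - 1)*(a*(1-a)*be^2 - b*(1-b))"
      by (simp add: algebra_simps power2_eq_square)
    also have "\<dots> \<le> (a*be^2 + (1-b))*((1-a)*be^2 + b)" using True assms by (simp add: one_le_power)
    finally show ?thesis using q by simp
  next
    case False
    have "b*(g*((1-a)+b)*be) = (b*g)*(((1-a)+b)*be)" by (simp add: algebra_simps)
    also have "\<dots> \<le> (a*be)*(((1-a)+b)*be)" using mult_right_mono[OF assms(7)] s by simp
    also have "\<dots> = a*(1-a)*be^2 + a*b*be^2" by (simp add: algebra_simps power2_eq_square)
    also have "\<dots> \<le> b*(a*be^2 + (1-b))" using False by (simp add: algebra_simps)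
    finally show ?thesis using assms by simp
  qed
  thus ?thesis unfolding P3_def by simp
qed

lemma L0_bounds:
  fixes a b be :: real
  defines "g \<equiv> post_gamma a b"
  assumes "0 \<le> a" "a \<le> 1" "b \<le> 1" "a + b > 1" and be: "be \<in> L0 a b"
  shows "0 < a" "a < 1" "0 < b" "b < 1" "1 \<le> be" "(1-a)*g \<le> a" "1-b \<le> b*g"
proof -
  have g0: "g > 0" unfolding g_def post_gamma_def by simp
  have L0: "(1-a)*g \<noteq> 0" "1-b \<noteq> 0" "1 \<le> be" "be \<le> a/((1-a)*g)" "be \<le> b*g/(1-b)"
    using be unfolding L0_def Let_def g_def by auto
  show a1: "a < 1" and b1: "b < 1" "1 \<le> be" using L0 assms by auto
  show "0 < a" "0 < b" using assms a1 b1 by linarith+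
  have "(1-a)*g \<le> be * ((1-a)*g)" "1-b \<le> be * (1-b)"
    using L0(3) a1 b1 g0 by simp_all
  moreover have "be * ((1-a)*g) \<le> a" "be * (1-b) \<le> b*g"
    using L0(4,5) a1 b1 g0 by (simp_all add: pos_le_divide_eq)
  ultimately show "(1-a)*g \<le> a" "1-b \<le> b*g" by linarith+
qed

lemma L123_sign_conditions:
  fixes a b be :: real
  defines "g \<equiv> post_gamma a b"
  assumes "0<a" "a<1" "0<b" "b<1" "1 \<le> be" and be: "be \<in> L1 a b \<union> L2 a b \<union> L3 a b"
  shows "P1 a b g be \<le> 0 \<and> P2 a b g be \<ge> 0"
proof -
  have g0: "g > 0" unfolding g_def post_gamma_def by simp
  note basic = assms(2-5) g0 assms(6)
  have D1: "D1 a b = (g*((1-a)+b))^2 - 4*(1-b)*a"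
    unfolding D1_def g_def by (simp add: power_mult_distrib)
  have D2: "D2 a b = (a+(1-b))^2 - 4*(b*g)*((1-a)*g)"
    unfolding D2_def g_def by (simp add: power2_eq_square algebra_simps)
  consider "be \<in> L1 a b" | "be \<in> L2 a b" | "be \<in> L3 a b" using be by blast
  then show ?thesis
  proof cases
    case 1
    hence h: "D1 a b \<ge> 0" "(1-a)/(1-b)*g \<le> be" "(g*((1-a)+b) - sqrt (D1 a b))/(2*(1-b)) \<le> be"
      "be \<le> (g*((1-a)+b) + sqrt (D1 a b))/(2*(1-b))"
      unfolding L1_def Let_def g_def by auto
    have p1: "P1 a b g be \<le> 0"
      using quadratic_nonpos_between_roots[OF _ D1 h(1) h(3) h(4)] assms unfolding P1_def by simp
    have "(1-a)*g \<le> (1-b)*be" using h(2) assms by (simp add: pos_divide_le_eq mult.commute)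
    with p1 show ?thesis using P2_nonneg_if_P1_nonpos[OF basic] by simp
  next
    case 2
    hence h: "D2 a b \<ge> 0" "be \<le> (1-a)/(1-b)*g" "((a+(1-b)) + sqrt (D2 a b))/(2*(b*g)) \<le> be"
      unfolding L2_def Let_def g_def by (auto simp: mult.assoc)
    have p2: "P2 a b g be \<ge> 0"
      using quadratic_nonneg_above_roots[OF _ D2 h(1) h(3)] assms g0 unfolding P2_def
      by (simp add: algebra_simps)
    have "(1-b)*be \<le> (1-a)*g" using h(2) assms by (simp add: pos_le_divide_eq mult.commute)
    with p2 show ?thesis using P1_nonpos_if_P2_nonneg[OF basic] by simp
  next
    case 3
    hence h: "D2 a b \<ge> 0" "be \<le> (1-a)/(1-b)*g" "be \<le> ((a+(1-b)) - sqrt (D2 a b))/(2*(b*g))"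
      unfolding L3_def Let_def g_def by (auto simp: mult.assoc)
    have p2: "P2 a b g be \<ge> 0"
      using quadratic_nonneg_below_roots[OF _ D2 h(1) h(3)] assms g0 unfolding P2_def
      by (simp add: algebra_simps)
    have "(1-b)*be \<le> (1-a)*g" using h(2) assms by (simp add: pos_le_divide_eq mult.commute)
    with p2 show ?thesis using P1_nonpos_if_P2_nonneg[OF basic] by simp
  qed
qed

lemma L456_sign_conditions:
  fixes a b be :: real
  defines "g \<equiv> post_gamma a b"
  assumes "0<a" "a<1" "0<b" "b<1" "1 \<le> be" and be: "be \<in> L4 a b \<union> L5 a b \<union> L6 a b"
  shows "P3 a b g be \<ge> 0 \<and> P4 a b g be \<le> 0"
proof -
  have g0: "g > 0" unfolding g_def post_gamma_def by simp
  note basic = assms(2-5) g0 assms(6)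
  have D1: "D1 a b = (g*((1-a)+b))^2 - 4*a*(1-b)"
    unfolding D1_def g_def by (simp add: power_mult_distrib)
  have D2: "D2 a b = (a+(1-b))^2 - 4*((1-a)*g)*(b*g)"
    unfolding D2_def g_def by (simp add: power2_eq_square algebra_simps)
  consider "be \<in> L4 a b" | "be \<in> L5 a b" | "be \<in> L6 a b" using be by blast
  then show ?thesis
  proof cases
    case 1
    hence h: "D1 a b \<ge> 0" "be \<le> b*g/a" "be \<le> (g*((1-a)+b) - sqrt (D1 a b))/(2*a)"
      unfolding L4_def Let_def g_def by auto
    have p3: "P3 a b g be \<ge> 0"
      using quadratic_nonneg_below_roots[OF _ D1 h(1) h(3)] assms unfolding P3_def by simp
    have "a*be \<le> b*g" using h(2) assms by (simp add: pos_le_divide_eq mult.commute)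
    with p3 show ?thesis using P4_nonpos_if_P3_nonneg[OF basic] by simp
  next
    case 2
    hence h: "D1 a b \<ge> 0" "be \<le> b*g/a" "(g*((1-a)+b) + sqrt (D1 a b))/(2*a) \<le> be"
      unfolding L5_def Let_def g_def by auto
    have p3: "P3 a b g be \<ge> 0"
      using quadratic_nonneg_above_roots[OF _ D1 h(1) h(3)] assms unfolding P3_def by simp
    have "a*be \<le> b*g" using h(2) assms by (simp add: pos_le_divide_eq mult.commute)
    with p3 show ?thesis using P4_nonpos_if_P3_nonneg[OF basic] by simp
  next
    case 3
    have two: "(2 - 2*a)*g = 2*((1-a)*g)" by (simp add: algebra_simps)
    from 3 have "D2 a b \<ge> 0" "b*g/a \<le> be" "((a+(1-b)) - sqrt (D2 a b))/((2 - 2*a)*g) \<le> be"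
      "be \<le> ((a+(1-b)) + sqrt (D2 a b))/((2 - 2*a)*g)"
      unfolding L6_def Let_def g_def by auto
    hence h: "D2 a b \<ge> 0" "b*g/a \<le> be" "((a+(1-b)) - sqrt (D2 a b))/(2*((1-a)*g)) \<le> be"
      "be \<le> ((a+(1-b)) + sqrt (D2 a b))/(2*((1-a)*g))"
      unfolding two .
    have p4: "P4 a b g be \<le> 0"
      using quadratic_nonpos_between_roots[OF _ D2 h(1) h(3) h(4)] assms g0 unfolding P4_def
      by (simp add: algebra_simps)
    have "b*g \<le> a*be" using h(2) assms by (simp add: pos_divide_le_eq mult.commute)
    with p4 show ?thesis using P3_nonneg_if_P4_nonpos[OF basic] by simp
  qed
qed

context post_setting begin

lemma exists_input_achieving:
  assumes D: "\<And>s x. kernel_div s x = C" and "1 \<le> be"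
    and "P1 a b g be \<le> 0" "P2 a b g be \<ge> 0" "P3 a b g be \<ge> 0" "P4 a b g be \<le> 0"
  shows "\<exists>p. input_dist n p \<and> mutual_info_nf a b n p = n * C"
proof (cases "be = 1")
  case False
  hence be1: "be > 1" using assms by simp
  show ?thesis
  proof (rule hmm_input_achieves[OF D])
    show "\<And>s y j. post_W a b s False y * vec_mat (hmm_init be s) (hmm_trans a b g be False) j
        + post_W a b s True y * vec_mat (hmm_init be s) (hmm_trans a b g be True) j
        = markov_kernel g s y * hmm_init be y j"
      by (rule hmm_trans_compatible) (use ab g0 be1 in auto)
    show "\<And>i. hmm_trans a b g be False i False + hmm_trans a b g be False i True
        + hmm_trans a b g be True i False + hmm_trans a b g be True i True = 1"
      by (rule hmm_trans_row_sum) (use ab g0 be1 in auto)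
    show "\<And>x i j. hmm_trans a b g be x i j \<ge> 0"
      by (rule hmm_trans_nonneg) (use ab g0 be1 assms in auto)
  qed (use be1 in \<open>auto simp: hmm_init_def field_simps\<close>)
next
  case True
  hence "g * ((1-a)+b) = a + (1-b)" using assms unfolding P1_def P3_def by simp
  then show ?thesis
    by (intro hmm_input_achieves[OF D, where w=hmm_init_unif and M=hmm_trans_diag]
        hmm_trans_diag_compatible)
      (use g0 a1 b0 in \<open>auto simp: hmm_trans_diag_def hmm_init_unif_def\<close>)
qed

lemma post_Cnf_n_eq:
  assumes D: "\<And>s x. kernel_div s x = C"
    and achieve: "\<exists>p. input_dist n p \<and> mutual_info_nf a b n p = n * C" and "n > 0"
  shows "post_Cnf_n a b n = C"
  unfolding post_Cnf_n_def
proof (rule cSup_eq_maximum)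
  obtain p where p: "input_dist n p" "mutual_info_nf a b n p = n * C" using achieve by blast
  show "C \<in> {mutual_info_nf a b n p / real n |p. input_dist n p}"
    using p \<open>n > 0\<close> by (intro CollectI exI[of _ p]) simp
  fix x assume "x \<in> {mutual_info_nf a b n p / real n |p. input_dist n p}"
  then obtain p where "input_dist n p" "x = mutual_info_nf a b n p / n" by blast
  thus "x \<le> C" using mutual_info_nf_le[OF D, where n=n and p=p] \<open>n > 0\<close>
    by (simp add: divide_le_eq mult.commute)
qed

lemma post_Cfb_n_eq:
  assumes D: "\<And>s x. kernel_div s x = C" and "0 \<le> pp" "pp \<le> 1"
    and pp: "\<And>s y. (1 - (if s then 1 - pp else pp)) * post_W a b s False y
                    + (if s then 1 - pp else pp) * post_W a b s True y = markov_kernel g s y"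
    and "n > 0"
  shows "post_Cfb_n a b n = C"
  unfolding post_Cfb_n_def
proof (rule cSup_eq_maximum)
  show "C \<in> {directed_info_fb a b n q / real n |q. fb_policy q}"
    using directed_info_fb_markov_policy[OF D assms(2,3) pp] \<open>n > 0\<close>
    by (intro CollectI exI[of _ "markov_policy pp"]) simp
  fix x assume "x \<in> {directed_info_fb a b n q / real n |q. fb_policy q}"
  then obtain q where "fb_policy q" "x = directed_info_fb a b n q / n" by blast
  thus "x \<le> C" using directed_info_fb_le[OF D, where q=q and n=n] \<open>n > 0\<close>
    by (simp add: divide_le_eq mult.commute)
qed

end

theorem lemma7:
  fixes a b :: real
  assumes "0 \<le> a" "a \<le> 1" "0 \<le> b" "b \<le> 1" "a + b > 1"
    and "(L1 a b \<union> L2 a b \<union> L3 a b) \<inter> (L4 a b \<union> L5 a b \<union> L6 a b) \<inter> L0 a b \<noteq> {}"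
  shows "convergent (post_Cnf_n a b) \<and> convergent (post_Cfb_n a b) \<and>
         post_capacity_nf a b = post_capacity_fb a b"
proof -
  define g where "g = post_gamma a b"
  obtain be where be: "be \<in> L1 a b \<union> L2 a b \<union> L3 a b" "be \<in> L4 a b \<union> L5 a b \<union> L6 a b"
    "be \<in> L0 a b" using assms(6) by blast
  note L0 = L0_bounds[OF assms(1,2,4,5) be(3), folded g_def]
  note P12 = L123_sign_conditions[OF L0(1-5) be(1), folded g_def]
  note P34 = L456_sign_conditions[OF L0(1-5) be(2), folded g_def]
  have g0: "g > 0" unfolding g_def post_gamma_def by simp
  interpret post_setting a b g using L0 g0 assms(5) by unfold_locales auto
  define C where "C = kernel_div False False"
  have D: "\<And>s x. kernel_div s x = C" unfolding C_def using kernel_div_const g_def by blast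
  have "eventually (\<lambda>n. post_Cnf_n a b n = C \<and> post_Cfb_n a b n = C) sequentially"
    using eventually_gt_at_top[of 0]
  proof eventually_elim
    case (elim n)
    show ?case
      using post_Cnf_n_eq[OF D exists_input_achieving[OF D L0(5)] elim]
        post_Cfb_n_eq[OF D policy_bias_bounds[OF ab g0] policy_bias_out[OF ab g0] elim]
        P12 P34 L0 by auto
  qed
  hence "post_Cnf_n a b \<longlonglongrightarrow> C" "post_Cfb_n a b \<longlonglongrightarrow> C"
    by (auto elim: tendsto_eventually[OF eventually_mono])
  thus ?thesis unfolding post_capacity_nf_def post_capacity_fb_def
    by (auto simp: convergent_def limI)
qed

end
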